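(* Let $\mathbf{A}$ be a countable UL-chain and let $\mathscr{K}_3$ be the class of all finite $\mathbf{A}$-structures $\langle\mathbf{A},\mathbf{M}\rangle$ in the language with a single binary relation symbol $<$ such that for all $a,b,c\in M$: (3.1) $\|a<a\|^{\mathbf{A}}_{\mathbf{M}}\ge\bar 1$; (3.2) if $\|a<b\|^{\mathbf{A}}_{\mathbf{M}}\ge\bar 1$ and $\|b<c\|^{\mathbf{A}}_{\mathbf{M}}\ge\bar 1$ then $\|a<c\|^{\mathbf{A}}_{\mathbf{M}}\ge\bar 1$; (3.3) if $\|a<b\|^{\mathbf{A}}_{\mathbf{M}}\ge\bar 1$ and $\|b<a\|^{\mathbf{A}}_{\mathbf{M}}\ge\bar 1$ then $a=b$. Then $\mathscr{K}_3^{\cong}$ is a Fraïssé class, i.e. a countable set of finitely generated $\mathbf{A}$-structures having the hereditary property, the joint embedding property and the amalgamation property.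
   Context: A UL-algebra is $\mathbf{A}=\langle A,\wedge,\vee,\&,\to,\bar 0,\bar 1,\bot,\top\rangle$ where $\langle A,\wedge,\vee,\bot,\top\rangle$ is a bounded lattice, $\langle A,\&,\bar 1\rangle$ is a commutative monoid, $a\& b\le c$ iff $b\le a\to c$, and $((a\to b)\wedge\bar 1)\vee((b\to a)\wedge \bar 1)=\bar 1$; a UL-chain is one with linear order. An $\mathbf{A}$-structure for $\{<\}$ is a set $M$ with a function $<_{\mathbf{M}}:M^2\to A$, $\|a<b\|^{\mathbf{A}}_{\mathbf{M}}=<_{\mathbf{M}}(a,b)$. Substructure: subset with restricted relation. Embedding: injective map preserving the values of $<$, identity on $\mathbf{A}$; isomorphism: surjective embedding. $\mathscr{K}^{\cong}$: one representative of each isomorphism type in $\mathscr{K}$. Hereditary property: closed under substructures (up to isomorphism). Joint embedding property: any two members embed into a common member. Amalgamation property: whenever $\mathbf{M}_0$ is a substructure of both $\mathbf{M}_1$ and $\mathbf{M}_2$, all in the class, there are a member $\mathbf{M}_3$ and embeddings $f_1:\mathbf{M}_1\to\mathbf{M}_3$, $f_2:\mathbf{M}_2\to\mathbf{M}_3$ agreeing on $M_0$. *)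

theory Defs
  imports Main "HOL-Library.Countable_Set"
begin

record 'a ul_alg =
  carrier :: "'a set"
  meet :: "'a \<Rightarrow> 'a \<Rightarrow> 'a"
  join :: "'a \<Rightarrow> 'a \<Rightarrow> 'a"
  mult :: "'a \<Rightarrow> 'a \<Rightarrow> 'a"
  imp  :: "'a \<Rightarrow> 'a \<Rightarrow> 'a"
  zero :: 'a
  one  :: 'a
  bot  :: 'a
  top  :: 'a

definition ul_le :: "'a ul_alg \<Rightarrow> 'a \<Rightarrow> 'a \<Rightarrow> bool" where
  "ul_le A x y \<longleftrightarrow> meet A x y = x"

definition ul_algebra :: "'a ul_alg \<Rightarrow> bool" where
  "ul_algebra A \<longleftrightarrow>
    \<comment> \<open>closure\<close>
    (\<forall>x\<in>carrier A. \<forall>y\<in>carrier A.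
        meet A x y \<in> carrier A \<and> join A x y \<in> carrier A \<and>
        mult A x y \<in> carrier A \<and> imp A x y \<in> carrier A) \<and>
    zero A \<in> carrier A \<and> one A \<in> carrier A \<and> bot A \<in> carrier A \<and> top A \<in> carrier A \<and>
    \<comment> \<open>bounded lattice\<close>
    (\<forall>x\<in>carrier A. \<forall>y\<in>carrier A. \<forall>z\<in>carrier A.
        meet A (meet A x y) z = meet A x (meet A y z) \<and>
        join A (join A x y) z = join A x (join A y z)) \<and>
    (\<forall>x\<in>carrier A. \<forall>y\<in>carrier A.
        meet A x y = meet A y x \<and> join A x y = join A y x \<and>
        meet A x (join A x y) = x \<and> join A x (meet A x y) = x) \<and>
    (\<forall>x\<in>carrier A. ul_le A (bot A) x \<and> ul_le A x (top A)) \<and>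
    \<comment> \<open>commutative monoid\<close>
    (\<forall>x\<in>carrier A. \<forall>y\<in>carrier A. \<forall>z\<in>carrier A.
        mult A (mult A x y) z = mult A x (mult A y z)) \<and>
    (\<forall>x\<in>carrier A. \<forall>y\<in>carrier A. mult A x y = mult A y x) \<and>
    (\<forall>x\<in>carrier A. mult A (one A) x = x) \<and>
    \<comment> \<open>residuation\<close>
    (\<forall>a\<in>carrier A. \<forall>b\<in>carrier A. \<forall>c\<in>carrier A.
        ul_le A (mult A a b) c \<longleftrightarrow> ul_le A b (imp A a c)) \<and>
    \<comment> \<open>prelinearity\<close>
    (\<forall>a\<in>carrier A. \<forall>b\<in>carrier A.
        join A (meet A (imp A a b) (one A)) (meet A (imp A b a) (one A)) = one A)"

definition ul_chain :: "'a ul_alg \<Rightarrow> bool" where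
  "ul_chain A \<longleftrightarrow> ul_algebra A \<and>
     (\<forall>x\<in>carrier A. \<forall>y\<in>carrier A. ul_le A x y \<or> ul_le A y x)"

text \<open>An A-structure is a pair (M, R) of a domain M and the valuation
  R a b = ||a < b|| of the binary symbol. Domains are subsets of nat
  (every finite / countable structure is isomorphic to one of this form).\<close>

type_synonym 'a strc = "nat set \<times> (nat \<Rightarrow> nat \<Rightarrow> 'a)"

definition a_structure :: "'a ul_alg \<Rightarrow> 'a strc \<Rightarrow> bool" where
  "a_structure A S \<longleftrightarrow> (\<forall>a\<in>fst S. \<forall>b\<in>fst S. snd S a b \<in> carrier A)"

definition substructure :: "'a strc \<Rightarrow> 'a strc \<Rightarrow> bool" where
  "substructure N M \<longleftrightarrow> fst N \<subseteq> fst M \<and>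
     (\<forall>a\<in>fst N. \<forall>b\<in>fst N. snd N a b = snd M a b)"

definition embedding :: "(nat \<Rightarrow> nat) \<Rightarrow> 'a strc \<Rightarrow> 'a strc \<Rightarrow> bool" where
  "embedding f M N \<longleftrightarrow> inj_on f (fst M) \<and> f ` fst M \<subseteq> fst N \<and>
     (\<forall>a\<in>fst M. \<forall>b\<in>fst M. snd N (f a) (f b) = snd M a b)"

definition isomorphism :: "(nat \<Rightarrow> nat) \<Rightarrow> 'a strc \<Rightarrow> 'a strc \<Rightarrow> bool" where
  "isomorphism f M N \<longleftrightarrow> embedding f M N \<and> f ` fst M = fst N"

definition isomorphic :: "'a strc \<Rightarrow> 'a strc \<Rightarrow> bool" where
  "isomorphic M N \<longleftrightarrow> (\<exists>f. isomorphism f M N)"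

definition K3 :: "'a ul_alg \<Rightarrow> 'a strc set" where
  "K3 A = {S. a_structure A S \<and> finite (fst S) \<and>
     (\<forall>a\<in>fst S. ul_le A (one A) (snd S a a)) \<and>
     (\<forall>a\<in>fst S. \<forall>b\<in>fst S. \<forall>c\<in>fst S.
        ul_le A (one A) (snd S a b) \<longrightarrow> ul_le A (one A) (snd S b c) \<longrightarrow>
        ul_le A (one A) (snd S a c)) \<and>
     (\<forall>a\<in>fst S. \<forall>b\<in>fst S.
        ul_le A (one A) (snd S a b) \<longrightarrow> ul_le A (one A) (snd S b a) \<longrightarrow> a = b)}"

definition iso_representatives :: "'a strc set \<Rightarrow> 'a strc set \<Rightarrow> bool" where
  "iso_representatives K R \<longleftrightarrow> R \<subseteq> K \<and>
     (\<forall>M\<in>K. \<exists>N\<in>R. isomorphic M N) \<and>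
     (\<forall>N1\<in>R. \<forall>N2\<in>R. isomorphic N1 N2 \<longrightarrow> N1 = N2)"

definition hereditary :: "'a strc set \<Rightarrow> bool" where
  "hereditary K \<longleftrightarrow> (\<forall>M\<in>K. \<forall>N. substructure N M \<longrightarrow> (\<exists>N'\<in>K. isomorphic N N'))"

definition joint_embedding :: "'a strc set \<Rightarrow> bool" where
  "joint_embedding K \<longleftrightarrow> (\<forall>M1\<in>K. \<forall>M2\<in>K. \<exists>M3\<in>K. \<exists>f1 f2.
     embedding f1 M1 M3 \<and> embedding f2 M2 M3)"

definition amalgamation :: "'a strc set \<Rightarrow> bool" where
  "amalgamation K \<longleftrightarrow> (\<forall>M0\<in>K. \<forall>M1\<in>K. \<forall>M2\<in>K. \<forall>e1 e2.
     embedding e1 M0 M1 \<longrightarrow> embedding e2 M0 M2 \<longrightarrow>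
     (\<exists>M3\<in>K. \<exists>f1 f2. embedding f1 M1 M3 \<and> embedding f2 M2 M3 \<and>
        (\<forall>a\<in>fst M0. f1 (e1 a) = f2 (e2 a))))"

text \<open>No function symbols: finitely generated = finite domain.\<close>
definition fraisse_class :: "'a ul_alg \<Rightarrow> 'a strc set \<Rightarrow> bool" where
  "fraisse_class A K \<longleftrightarrow> countable K \<and>
     (\<forall>M\<in>K. a_structure A M \<and> finite (fst M)) \<and>
     hereditary K \<and> joint_embedding K \<and> amalgamation K"

end

theory Submission
  imports Defs
begin

text \<open>The conditions defining \<open>K3\<close> say exactly that the crisp part
  \<open>{(a, b). 1 \<le> \<parallel>a < b\<parallel>}\<close> of a structure is a partial order on its domain.
  To amalgamate \<open>M1\<close> and \<open>M2\<close> over \<open>M0\<close>, rename \<open>M2\<close> so that it meets \<open>M1\<close> exactly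
  in the image of \<open>M0\<close> and take the union: pairs inside \<open>M1\<close> or inside \<open>M2\<close> keep
  their values, and a cross pair gets the value \<open>1\<close> if it lies in the amalgam
  \<open>r \<union> s \<union> r O s \<union> s O r\<close> of the two crisp orders, and otherwise some value \<open>w\<close>
  with \<open>\<not> 1 \<le> w\<close>. Such a \<open>w\<close> exists unless \<open>A\<close> is trivial, and then every
  structure in \<open>K3\<close> has at most one point. Joint embedding is amalgamation over the
  empty structure, and the representatives form a countable set because a finite
  structure is determined up to isomorphism by its matrix of values over the
  countable carrier.\<close>

lemma ul_le_refl:
  assumes "ul_algebra A" "x \<in> carrier A"
  shows "ul_le A x x"
proof -
  have "meet A x x \<in> carrier A" "join A x (meet A x x) = x" "meet A x (join A x (meet A x x)) = x"
    using assms unfolding ul_algebra_def by blast+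
  then show ?thesis unfolding ul_le_def by simp
qed

lemma ul_le_antisym:
  assumes "ul_algebra A" "x \<in> carrier A" "y \<in> carrier A" "ul_le A x y" "ul_le A y x"
  shows "x = y"
proof -
  have "meet A x y = meet A y x" using assms(1-3) unfolding ul_algebra_def by blast
  then show ?thesis using assms(4,5) unfolding ul_le_def by simp
qed

lemma ul_algebra_one_closed: "ul_algebra A \<Longrightarrow> one A \<in> carrier A"
  unfolding ul_algebra_def by (elim conjE)

lemma ul_algebra_trivial_if_one_least:
  assumes A: "ul_algebra A" and one_least: "\<forall>x\<in>carrier A. ul_le A (one A) x"
  shows "carrier A = {bot A}"
proof -
  have one: "one A \<in> carrier A" and bot: "bot A \<in> carrier A"
    using A unfolding ul_algebra_def by auto
  have "ul_le A (bot A) (one A)"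
    using A one unfolding ul_algebra_def by blast
  then have one_bot: "one A = bot A"
    using ul_le_antisym[OF A one bot] one_least bot by blast
  have "x = bot A" if x: "x \<in> carrier A" for x
  proof -
    have "mult A x (one A) = mult A (one A) x" "mult A (one A) x = x"
      using A x one unfolding ul_algebra_def by blast+
    then have "mult A x (bot A) = x" using one_bot by simp
    moreover have "ul_le A (bot A) (imp A x (bot A))"
      using A x bot unfolding ul_algebra_def by blast
    then have "ul_le A (mult A x (bot A)) (bot A)"
      using A x bot unfolding ul_algebra_def by blast
    ultimately have "ul_le A x (bot A)" by simp
    moreover have "ul_le A (bot A) x"
      using A x unfolding ul_algebra_def by blast
    ultimately show ?thesis using ul_le_antisym[OF A x bot] by blast
  qed
  then show ?thesis using bot by blast
qed

definition poset_amalgam :: "'b rel \<Rightarrow> 'b rel \<Rightarrow> 'b rel" where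
  "poset_amalgam r s = r \<union> s \<union> r O s \<union> s O r"

lemma poset_amalgam_commute: "poset_amalgam r s = poset_amalgam s r"
  unfolding poset_amalgam_def by blast

lemma relcomp_through_common_part:
  assumes r: "partial_order_on S r" and s: "partial_order_on T s"
    and agree: "Restr r (S \<inter> T) = Restr s (S \<inter> T)"
  shows "r O s O r \<subseteq> r"
proof -
  have "Restr s (S \<inter> T) \<subseteq> r" using agree by blast
  moreover have "r \<subseteq> S \<times> S" "s \<subseteq> T \<times> T" "trans r"
    using r s unfolding partial_order_on_def preorder_on_def by auto
  ultimately show ?thesis unfolding trans_def by blast
qed

lemma poset_amalgam_restrict:
  assumes r: "partial_order_on S r" and s: "partial_order_on T s"
    and agree: "Restr r (S \<inter> T) = Restr s (S \<inter> T)"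
  shows "Restr (poset_amalgam r s) S = r"
proof -
  have "r \<subseteq> S \<times> S" "s \<subseteq> T \<times> T" "trans r"
    using r s unfolding partial_order_on_def preorder_on_def by auto
  then show ?thesis using agree unfolding poset_amalgam_def trans_def by blast
qed

lemma trans_poset_amalgam:
  assumes r: "partial_order_on S r" and s: "partial_order_on T s"
    and agree: "Restr r (S \<inter> T) = Restr s (S \<inter> T)"
  shows "trans (poset_amalgam r s)"
proof -
  have "trans r" "trans s"
    using r s unfolding partial_order_on_def preorder_on_def by auto
  moreover have "r O s O r \<subseteq> r" "s O r O s \<subseteq> s"
    using relcomp_through_common_part[OF r s agree] relcomp_through_common_part[OF s r] agree
    by blast+
  ultimately show ?thesis unfolding poset_amalgam_def trans_def by blast
qed

lemma antisym_poset_amalgam: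
  assumes r: "partial_order_on S r" and s: "partial_order_on T s"
    and agree: "Restr r (S \<inter> T) = Restr s (S \<inter> T)"
  shows "antisym (poset_amalgam r s)"
proof (rule antisymI)
  let ?U = "poset_amalgam r s"
  have sub: "r \<subseteq> S \<times> S" "s \<subseteq> T \<times> T" and antisym: "antisym r" "antisym s"
    using r s unfolding partial_order_on_def preorder_on_def by auto
  have restr: "Restr ?U S = r" "Restr ?U T = s"
    using poset_amalgam_restrict[OF r s agree] poset_amalgam_restrict[OF s r] agree
    by (auto simp: poset_amalgam_commute)
  have no_crossing: False
    if u: "u \<in> S - T" and v: "v \<in> T - S" and uv: "(u, v) \<in> ?U" and vu: "(v, u) \<in> ?U" for u v
  proof -
    obtain c where uc: "(u, c) \<in> r" and cv: "(c, v) \<in> s"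
      using u v uv sub unfolding poset_amalgam_def by blast
    have "(c, u) \<in> ?U"
      using trans_poset_amalgam[OF r s agree] cv vu unfolding poset_amalgam_def trans_def by blast
    moreover have "u \<in> S" "c \<in> S" using uc sub by blast+
    ultimately have "(c, u) \<in> r" using restr(1) by blast
    then have "u = c" using uc antisym(1) by (simp add: antisym_def)
    then show False
      using cv u sub by blast
  qed
  fix x y assume xy: "(x, y) \<in> ?U" and yx: "(y, x) \<in> ?U"
  have "x \<in> S \<union> T" "y \<in> S \<union> T"
    using xy sub unfolding poset_amalgam_def by blast+
  then consider "x \<in> S" "y \<in> S" | "x \<in> T" "y \<in> T" | "x \<in> S - T" "y \<in> T - S"
    | "y \<in> S - T" "x \<in> T - S"
    by blast
  then show "x = y"
  proof cases
    case 1
    then have "(x, y) \<in> r" "(y, x) \<in> r" using xy yx restr(1) by blast+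
    then show ?thesis using antisym(1) by (simp add: antisym_def)
  next
    case 2
    then have "(x, y) \<in> s" "(y, x) \<in> s" using xy yx restr(2) by blast+
    then show ?thesis using antisym(2) by (simp add: antisym_def)
  qed (use xy yx no_crossing in blast)+
qed

lemma partial_order_on_poset_amalgam:
  assumes r: "partial_order_on S r" and s: "partial_order_on T s"
    and agree: "Restr r (S \<inter> T) = Restr s (S \<inter> T)"
  shows "partial_order_on (S \<union> T) (poset_amalgam r s)"
proof -
  have "r \<subseteq> S \<times> S" "s \<subseteq> T \<times> T" "refl_on S r" "refl_on T s"
    using r s unfolding partial_order_on_def preorder_on_def by auto
  then have "poset_amalgam r s \<subseteq> (S \<union> T) \<times> (S \<union> T)" "refl_on (S \<union> T) (poset_amalgam r s)"
    unfolding poset_amalgam_def refl_on_def by blast+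
  then show ?thesis
    using trans_poset_amalgam[OF r s agree] antisym_poset_amalgam[OF r s agree]
    unfolding partial_order_on_def preorder_on_def by blast
qed

lemma embedding_comp: "embedding f M N \<Longrightarrow> embedding g N P \<Longrightarrow> embedding (g \<circ> f) M P"
  unfolding embedding_def by (auto simp: comp_inj_on image_subset_iff inj_on_def)

lemma embedding_id_if_substructure: "substructure N M \<Longrightarrow> embedding id N M"
  unfolding substructure_def embedding_def by auto

definition image_strc :: "(nat \<Rightarrow> nat) \<Rightarrow> 'a strc \<Rightarrow> 'a strc" where
  "image_strc g M = (g ` fst M, \<lambda>u v. snd M (inv_into (fst M) g u) (inv_into (fst M) g v))"

lemma embedding_image_strc: "inj_on g (fst M) \<Longrightarrow> embedding g M (image_strc g M)"
  unfolding embedding_def image_strc_def by auto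

lemma embedding_inv_into_image_strc:
  "inj_on g (fst M) \<Longrightarrow> embedding (inv_into (fst M) g) (image_strc g M) M"
  unfolding embedding_def image_strc_def by (auto simp: inj_on_inv_into inv_into_into)

lemma exists_gluing_map:
  fixes S1 S2 X :: "nat set"
  assumes "finite S1" and e1: "inj_on e1 X" "e1 ` X \<subseteq> S1" and e2: "inj_on e2 X" "e2 ` X \<subseteq> S2"
  obtains g where "inj_on g S2" "\<forall>x\<in>X. g (e2 x) = e1 x" "S1 \<inter> g ` S2 = e1 ` X"
proof -
  obtain N where N: "\<forall>x\<in>S1. x < N"
    using assms(1) finite_nat_set_iff_bounded by auto
  define g where "g y = (if y \<in> e2 ` X then e1 (inv_into X e2 y) else y + N)" for y
  have g_e2: "g (e2 x) = e1 x" if "x \<in> X" for x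
    using that e2(1) unfolding g_def by simp
  have g_outside: "g y \<notin> S1" if "y \<notin> e2 ` X" for y
    using N that unfolding g_def by fastforce
  have g_inside: "g y \<in> S1" if "y \<in> e2 ` X" for y
    using that g_e2 e1(2) by auto
  have "inj_on g S2"
  proof (rule inj_onI)
    fix y z assume "y \<in> S2" "z \<in> S2" and gyz: "g y = g z"
    consider "y \<in> e2 ` X" "z \<in> e2 ` X" | "y \<notin> e2 ` X" "z \<notin> e2 ` X"
      | "y \<in> e2 ` X \<longleftrightarrow> z \<notin> e2 ` X"
      by blast
    then show "y = z"
    proof cases
      case 1
      then obtain x x' where "x \<in> X" "x' \<in> X" "y = e2 x" "z = e2 x'" by blast
      then show ?thesis using gyz g_e2 e1(1) by (metis inj_onD)
    next
      case 2
      then show ?thesis using gyz unfolding g_def by simp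
    next
      case 3
      then show ?thesis using gyz g_inside g_outside by metis
    qed
  qed
  moreover have "S1 \<inter> g ` S2 = e1 ` X"
  proof
    show "S1 \<inter> g ` S2 \<subseteq> e1 ` X"
    proof
      fix u assume "u \<in> S1 \<inter> g ` S2"
      then obtain y where "u = g y" "y \<in> e2 ` X" using g_outside by blast
      then show "u \<in> e1 ` X" using g_e2 by auto
    qed
    show "e1 ` X \<subseteq> S1 \<inter> g ` S2"
      using g_e2 e1(2) e2(2) by (force simp: image_iff)
  qed
  ultimately show ?thesis using that g_e2 by blast
qed

definition crisp_rel :: "'a ul_alg \<Rightarrow> 'a strc \<Rightarrow> nat rel" where
  "crisp_rel A M = {(a, b). a \<in> fst M \<and> b \<in> fst M \<and> ul_le A (one A) (snd M a b)}"

lemma K3_iff_partial_order: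
  "M \<in> K3 A \<longleftrightarrow> a_structure A M \<and> finite (fst M) \<and> partial_order_on (fst M) (crisp_rel A M)"
proof -
  have "partial_order_on (fst M) (crisp_rel A M) \<longleftrightarrow>
      (\<forall>a\<in>fst M. ul_le A (one A) (snd M a a)) \<and>
      (\<forall>a\<in>fst M. \<forall>b\<in>fst M. \<forall>c\<in>fst M.
        ul_le A (one A) (snd M a b) \<longrightarrow> ul_le A (one A) (snd M b c) \<longrightarrow>
        ul_le A (one A) (snd M a c)) \<and>
      (\<forall>a\<in>fst M. \<forall>b\<in>fst M.
        ul_le A (one A) (snd M a b) \<longrightarrow> ul_le A (one A) (snd M b a) \<longrightarrow> a = b)"
    unfolding crisp_rel_def partial_order_on_def preorder_on_def refl_on_def trans_def antisym_def
    by blast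
  then show ?thesis unfolding K3_def by blast
qed

lemma K3_embedding_reflects:
  assumes "embedding f N M" "M \<in> K3 A"
  shows "N \<in> K3 A"
proof -
  have inj: "inj_on f (fst N)" and into: "\<And>a. a \<in> fst N \<Longrightarrow> f a \<in> fst M"
    and val: "\<And>a b. a \<in> fst N \<Longrightarrow> b \<in> fst N \<Longrightarrow> snd N a b = snd M (f a) (f b)"
    using assms(1) unfolding embedding_def by auto
  have "finite (fst M)" using assms(2) unfolding K3_def by blast
  then have "finite (f ` fst N)" using into finite_subset by (metis image_subset_iff)
  then have "finite (fst N)" using inj finite_imageD by blast
  moreover have "f a = f b \<Longrightarrow> a \<in> fst N \<Longrightarrow> b \<in> fst N \<Longrightarrow> a = b" for a b
    using inj by (simp add: inj_on_eq_iff)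
  ultimately show ?thesis
    using assms(2) into unfolding K3_def a_structure_def by (simp add: val) (metis into)
qed

definition strc_compatible :: "'a strc \<Rightarrow> 'a strc \<Rightarrow> bool" where
  "strc_compatible M1 M2 \<longleftrightarrow>
    (\<forall>a\<in>fst M1 \<inter> fst M2. \<forall>b\<in>fst M1 \<inter> fst M2. snd M1 a b = snd M2 a b)"

definition strc_amalgam :: "'a ul_alg \<Rightarrow> 'a \<Rightarrow> 'a strc \<Rightarrow> 'a strc \<Rightarrow> 'a strc" where
  "strc_amalgam A w M1 M2 = (fst M1 \<union> fst M2, \<lambda>a b.
     if a \<in> fst M1 \<and> b \<in> fst M1 then snd M1 a b
     else if a \<in> fst M2 \<and> b \<in> fst M2 then snd M2 a b
     else if (a, b) \<in> poset_amalgam (crisp_rel A M1) (crisp_rel A M2) then one A else w)"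

lemma substructure_strc_amalgam:
  assumes "strc_compatible M1 M2"
  shows "substructure M1 (strc_amalgam A w M1 M2)" "substructure M2 (strc_amalgam A w M1 M2)"
  using assms unfolding substructure_def strc_amalgam_def strc_compatible_def by simp_all

lemma crisp_rel_agree_if_compatible:
  "strc_compatible M1 M2 \<Longrightarrow>
    Restr (crisp_rel A M1) (fst M1 \<inter> fst M2) = Restr (crisp_rel A M2) (fst M1 \<inter> fst M2)"
  unfolding strc_compatible_def crisp_rel_def by fastforce

lemma crisp_rel_strc_amalgam:
  assumes A: "ul_algebra A" and w: "\<not> ul_le A (one A) w"
    and M1: "M1 \<in> K3 A" and M2: "M2 \<in> K3 A" and compat: "strc_compatible M1 M2"
  shows "crisp_rel A (strc_amalgam A w M1 M2) = poset_amalgam (crisp_rel A M1) (crisp_rel A M2)"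
proof -
  let ?U = "poset_amalgam (crisp_rel A M1) (crisp_rel A M2)"
  have po: "partial_order_on (fst M1) (crisp_rel A M1)" "partial_order_on (fst M2) (crisp_rel A M2)"
    using M1 M2 by (simp_all add: K3_iff_partial_order)
  note agree = crisp_rel_agree_if_compatible[OF compat]
  have agree': "Restr (crisp_rel A M2) (fst M2 \<inter> fst M1) = Restr (crisp_rel A M1) (fst M2 \<inter> fst M1)"
    using agree by (simp add: Int_commute)
  have restr: "Restr ?U (fst M1) = crisp_rel A M1" "Restr ?U (fst M2) = crisp_rel A M2"
    using poset_amalgam_restrict[OF po agree] poset_amalgam_restrict[OF po(2,1) agree']
    by (simp_all add: poset_amalgam_commute[of "crisp_rel A M2" "crisp_rel A M1"])
  have field: "?U \<subseteq> (fst M1 \<union> fst M2) \<times> (fst M1 \<union> fst M2)"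
    using partial_order_on_poset_amalgam[OF po agree]
    unfolding partial_order_on_def preorder_on_def by blast
  have one: "ul_le A (one A) (one A)" by (rule ul_le_refl[OF A ul_algebra_one_closed[OF A]])
  have "(a, b) \<in> crisp_rel A (strc_amalgam A w M1 M2) \<longleftrightarrow> (a, b) \<in> ?U" for a b
  proof (cases "a \<in> fst M1 \<and> b \<in> fst M1")
    case True
    then have "(a, b) \<in> ?U \<longleftrightarrow> (a, b) \<in> crisp_rel A M1" using restr(1) by blast
    then show ?thesis using True by (simp add: crisp_rel_def strc_amalgam_def)
  next
    case not_M1: False
    show ?thesis
    proof (cases "a \<in> fst M2 \<and> b \<in> fst M2")
      case True
      then have "(a, b) \<in> ?U \<longleftrightarrow> (a, b) \<in> crisp_rel A M2" using restr(2) by blast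
      then show ?thesis using True not_M1 by (auto simp: crisp_rel_def strc_amalgam_def)
    next
      case False
      then show ?thesis using not_M1 field one w by (auto simp: crisp_rel_def strc_amalgam_def)
    qed
  qed
  then show ?thesis by auto
qed

lemma strc_amalgam_in_K3:
  assumes A: "ul_algebra A" and w: "w \<in> carrier A" "\<not> ul_le A (one A) w"
    and M1: "M1 \<in> K3 A" and M2: "M2 \<in> K3 A" and compat: "strc_compatible M1 M2"
  shows "strc_amalgam A w M1 M2 \<in> K3 A"
proof -
  have M1': "a_structure A M1" "finite (fst M1)" "partial_order_on (fst M1) (crisp_rel A M1)"
    and M2': "a_structure A M2" "finite (fst M2)" "partial_order_on (fst M2) (crisp_rel A M2)"
    using M1 M2 by (simp_all add: K3_iff_partial_order)
  have "a_structure A (strc_amalgam A w M1 M2)"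
    using M1'(1) M2'(1) w(1) ul_algebra_one_closed[OF A]
    unfolding a_structure_def strc_amalgam_def by auto
  moreover have "fst (strc_amalgam A w M1 M2) = fst M1 \<union> fst M2"
    by (simp add: strc_amalgam_def)
  moreover have "partial_order_on (fst M1 \<union> fst M2) (crisp_rel A (strc_amalgam A w M1 M2))"
    unfolding crisp_rel_strc_amalgam[OF A w(2) M1 M2 compat]
    by (rule partial_order_on_poset_amalgam[OF M1'(3) M2'(3) crisp_rel_agree_if_compatible[OF compat]])
  ultimately show ?thesis
    using M1'(2) M2'(2) by (simp add: K3_iff_partial_order)
qed

lemma embedding_into_point_if_trivial:
  assumes A: "ul_algebra A" and trivial: "carrier A = {x}" and M: "M \<in> K3 A"
  shows "embedding (\<lambda>_. 0) M ({0}, \<lambda>_ _. x)"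
proof -
  have "one A = x" using ul_algebra_one_closed[OF A] trivial by blast
  then have crisp: "ul_le A (one A) x" using ul_le_refl[OF A] trivial by blast
  have M': "a_structure A M" "partial_order_on (fst M) (crisp_rel A M)"
    using M by (simp_all add: K3_iff_partial_order)
  have val: "snd M a b = x" if "a \<in> fst M" "b \<in> fst M" for a b
    using M'(1) that trivial unfolding a_structure_def by blast
  have "a = b" if "a \<in> fst M" "b \<in> fst M" for a b
  proof -
    have "(a, b) \<in> crisp_rel A M" "(b, a) \<in> crisp_rel A M"
      using that crisp val by (simp_all add: crisp_rel_def)
    then show ?thesis
      using M'(2) unfolding partial_order_on_def by (blast dest: antisymD)
  qed
  then show ?thesis using val unfolding embedding_def inj_on_def by auto
qed

lemma strc_compatible_image_strc:
  assumes e1: "embedding e1 M0 M1" and e2: "embedding e2 M0 M2"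
    and g: "inj_on g (fst M2)" "\<forall>a\<in>fst M0. g (e2 a) = e1 a"
    and glued: "fst M1 \<inter> g ` fst M2 = e1 ` fst M0"
  shows "strc_compatible M1 (image_strc g M2)"
  unfolding strc_compatible_def
proof (intro ballI)
  let ?M2' = "image_strc g M2"
  fix u v assume "u \<in> fst M1 \<inter> fst ?M2'" "v \<in> fst M1 \<inter> fst ?M2'"
  then have "u \<in> e1 ` fst M0" "v \<in> e1 ` fst M0"
    using glued by (simp_all add: image_strc_def)
  then obtain a b where ab: "a \<in> fst M0" "b \<in> fst M0" "u = e1 a" "v = e1 b"
    by blast
  have "e2 a \<in> fst M2" "e2 b \<in> fst M2"
    using e2 ab unfolding embedding_def by blast+
  then have "snd ?M2' (g (e2 a)) (g (e2 b)) = snd M2 (e2 a) (e2 b)"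
    using embedding_image_strc[OF g(1)] unfolding embedding_def by blast
  then have "snd ?M2' u v = snd M2 (e2 a) (e2 b)"
    using g(2) ab by simp
  also have "\<dots> = snd M1 u v"
    using e1 e2 ab unfolding embedding_def by simp
  finally show "snd M1 u v = snd ?M2' u v" ..
qed

lemma K3_amalgam_if_value_not_above_one:
  assumes A: "ul_algebra A" and w: "w \<in> carrier A" "\<not> ul_le A (one A) w"
    and M1: "M1 \<in> K3 A" and M2: "M2 \<in> K3 A"
    and e1: "embedding e1 M0 M1" and e2: "embedding e2 M0 M2"
  shows "\<exists>M3\<in>K3 A. \<exists>f1 f2. embedding f1 M1 M3 \<and> embedding f2 M2 M3 \<and>
      (\<forall>a\<in>fst M0. f1 (e1 a) = f2 (e2 a))"
proof -
  have "finite (fst M1)" using M1 by (simp add: K3_iff_partial_order)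
  moreover have "inj_on e1 (fst M0)" "e1 ` fst M0 \<subseteq> fst M1"
    and "inj_on e2 (fst M0)" "e2 ` fst M0 \<subseteq> fst M2"
    using e1 e2 unfolding embedding_def by auto
  ultimately obtain g where g: "inj_on g (fst M2)" "\<forall>a\<in>fst M0. g (e2 a) = e1 a"
    and glued: "fst M1 \<inter> g ` fst M2 = e1 ` fst M0"
    by (rule exists_gluing_map)
  let ?M2' = "image_strc g M2"
  have M2': "?M2' \<in> K3 A"
    using K3_embedding_reflects[OF embedding_inv_into_image_strc[OF g(1)] M2] .
  have compat: "strc_compatible M1 ?M2'"
    by (rule strc_compatible_image_strc[OF e1 e2 g glued])
  let ?M3 = "strc_amalgam A w M1 ?M2'"
  have M1_M3: "embedding id M1 ?M3" and M2'_M3: "embedding id ?M2' ?M3"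
    using substructure_strc_amalgam[OF compat] by (simp_all add: embedding_id_if_substructure)
  have "embedding g M2 ?M3"
    using embedding_comp[OF embedding_image_strc[OF g(1)] M2'_M3] by simp
  moreover have "?M3 \<in> K3 A" by (rule strc_amalgam_in_K3[OF A w M1 M2' compat])
  ultimately show ?thesis using M1_M3 g(2) by force
qed

lemma amalgamation_K3:
  assumes A: "ul_algebra A"
  shows "amalgamation (K3 A)"
  unfolding amalgamation_def
proof (intro ballI allI impI)
  fix M0 M1 M2 e1 e2
  assume "M0 \<in> K3 A" and M1: "M1 \<in> K3 A" and M2: "M2 \<in> K3 A"
    and e: "embedding e1 M0 M1" "embedding e2 M0 M2"
  show "\<exists>M3\<in>K3 A. \<exists>f1 f2. embedding f1 M1 M3 \<and> embedding f2 M2 M3 \<and>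
      (\<forall>a\<in>fst M0. f1 (e1 a) = f2 (e2 a))"
  proof (cases "\<exists>w\<in>carrier A. \<not> ul_le A (one A) w")
    case True
    then show ?thesis using K3_amalgam_if_value_not_above_one[OF A _ _ M1 M2 e] by blast
  next
    case False
    then have trivial: "carrier A = {bot A}"
      using ul_algebra_trivial_if_one_least[OF A] by blast
    have "ul_le A (one A) (bot A)"
      using ul_le_refl[OF A] ul_algebra_one_closed[OF A] trivial by simp
    then have "({0}, \<lambda>_ _. bot A) \<in> K3 A"
      using trivial by (simp add: K3_def a_structure_def)
    then show ?thesis
      using embedding_into_point_if_trivial[OF A trivial] M1 M2 by blast
  qed
qed

lemma hereditary_if_representatives:
  assumes "iso_representatives K R" and "\<And>M N. M \<in> K \<Longrightarrow> substructure N M \<Longrightarrow> N \<in> K"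
  shows "hereditary R"
  unfolding hereditary_def
proof (intro ballI allI impI)
  fix M N assume "M \<in> R" "substructure N M"
  then have "N \<in> K" using assms unfolding iso_representatives_def by blast
  then show "\<exists>N'\<in>R. isomorphic N N'" using assms(1) unfolding iso_representatives_def by blast
qed

lemma amalgamation_if_representatives:
  assumes R: "iso_representatives K R" and K: "amalgamation K"
  shows "amalgamation R"
  unfolding amalgamation_def
proof (intro ballI allI impI)
  fix M0 M1 M2 e1 e2
  assume "M0 \<in> R" "M1 \<in> R" "M2 \<in> R" and e: "embedding e1 M0 M1" "embedding e2 M0 M2"
  then have "M0 \<in> K" "M1 \<in> K" "M2 \<in> K" using R unfolding iso_representatives_def by blast+
  then obtain M3 f1 f2 where M3: "M3 \<in> K" "embedding f1 M1 M3" "embedding f2 M2 M3"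
    and agree: "\<forall>a\<in>fst M0. f1 (e1 a) = f2 (e2 a)"
    using K[unfolded amalgamation_def, rule_format, OF _ _ _ e] by blast
  obtain N \<phi> where "N \<in> R" "isomorphism \<phi> M3 N"
    using R M3(1) unfolding iso_representatives_def isomorphic_def by blast
  moreover from this(2) have "embedding (\<phi> \<circ> f1) M1 N" "embedding (\<phi> \<circ> f2) M2 N"
    using M3 embedding_comp unfolding isomorphism_def by blast+
  moreover have "\<forall>a\<in>fst M0. (\<phi> \<circ> f1) (e1 a) = (\<phi> \<circ> f2) (e2 a)"
    using agree by simp
  ultimately show "\<exists>M3\<in>R. \<exists>f1 f2. embedding f1 M1 M3 \<and> embedding f2 M2 M3 \<and>
      (\<forall>a\<in>fst M0. f1 (e1 a) = f2 (e2 a))"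
    by blast
qed

lemma joint_embedding_if_amalgamation:
  assumes K: "amalgamation K" and E: "E \<in> K" "fst E = {}"
  shows "joint_embedding K"
  unfolding joint_embedding_def
proof (intro ballI)
  fix M1 M2 assume "M1 \<in> K" "M2 \<in> K"
  moreover have "embedding id E M1" "embedding id E M2"
    using E(2) unfolding embedding_def by simp_all
  ultimately show "\<exists>M3\<in>K. \<exists>f1 f2. embedding f1 M1 M3 \<and> embedding f2 M2 M3"
    using K[unfolded amalgamation_def, rule_format, OF E(1)] by blast
qed

definition strc_matrix :: "'a strc \<Rightarrow> 'a list list" where
  "strc_matrix M = map (\<lambda>a. map (snd M a) (sorted_list_of_set (fst M))) (sorted_list_of_set (fst M))"

lemma strc_matrix_in_lists:
  "a_structure A M \<Longrightarrow> finite (fst M) \<Longrightarrow> strc_matrix M \<in> lists (lists (carrier A))"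
  unfolding strc_matrix_def a_structure_def by auto

lemma isomorphic_if_strc_matrix_eq:
  assumes M: "finite (fst M)" and N: "finite (fst N)" and eq: "strc_matrix M = strc_matrix N"
  shows "isomorphic M N"
proof -
  define xs where "xs = sorted_list_of_set (fst M)"
  define ys where "ys = sorted_list_of_set (fst N)"
  define n where "n = length xs"
  have eq': "map (\<lambda>a. map (snd M a) xs) xs = map (\<lambda>b. map (snd N b) ys) ys"
    using eq unfolding strc_matrix_def xs_def ys_def .
  then have len: "length ys = n" unfolding n_def by (metis length_map)
  have val: "snd N (ys ! i) (ys ! j) = snd M (xs ! i) (xs ! j)" if "i < n" "j < n" for i j
    using arg_cong[OF eq', of "\<lambda>m. m ! i ! j"] that len unfolding n_def by simp
  have "distinct xs" "set xs = fst M" "distinct ys" "set ys = fst N"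
    using M N unfolding xs_def ys_def by simp_all
  then have bij_xs: "bij_betw ((!) xs) {..<n} (fst M)" and bij_ys: "bij_betw ((!) ys) {..<n} (fst N)"
    using bij_betw_nth len unfolding n_def by metis+
  define f where "f = (!) ys \<circ> inv_into {..<n} ((!) xs)"
  have bij_f: "bij_betw f (fst M) (fst N)"
    unfolding f_def using bij_betw_trans[OF bij_betw_inv_into[OF bij_xs] bij_ys] .
  have f_nth: "f (xs ! i) = ys ! i" if "i < n" for i
    using that bij_betw_imp_inj_on[OF bij_xs] unfolding f_def by (simp add: inv_into_f_f)
  have "snd N (f a) (f b) = snd M a b" if "a \<in> fst M" "b \<in> fst M" for a b
  proof -
    have "a \<in> (!) xs ` {..<n}" "b \<in> (!) xs ` {..<n}"
      using that bij_betw_imp_surj_on[OF bij_xs] by simp_all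
    then obtain i j where "i < n" "j < n" "a = xs ! i" "b = xs ! j" by blast
    then show ?thesis using f_nth val by simp
  qed
  then have "isomorphism f M N"
    using bij_f unfolding isomorphism_def embedding_def bij_betw_def by simp
  then show ?thesis unfolding isomorphic_def by blast
qed

lemma countable_if_pairwise_nonisomorphic:
  assumes A: "countable (carrier A)"
    and R: "\<And>M. M \<in> R \<Longrightarrow> a_structure A M \<and> finite (fst M)"
    and distinct: "\<And>M N. M \<in> R \<Longrightarrow> N \<in> R \<Longrightarrow> isomorphic M N \<Longrightarrow> M = N"
  shows "countable R"
proof (rule countable_image_inj_on)
  have "strc_matrix ` R \<subseteq> lists (lists (carrier A))"
    using R strc_matrix_in_lists by blast
  then show "countable (strc_matrix ` R)"
    by (rule countable_subset) (intro countable_lists A)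
  show "inj_on strc_matrix R"
  proof (rule inj_onI)
    fix M N assume "M \<in> R" "N \<in> R" "strc_matrix M = strc_matrix N"
    then show "M = N" using R distinct isomorphic_if_strc_matrix_eq by blast
  qed
qed

theorem proposition4:
  fixes A :: "'a ul_alg" and R :: "'a strc set"
  assumes "ul_chain A" and "countable (carrier A)"
    and "iso_representatives (K3 A) R"
  shows "fraisse_class A R"
proof -
  have A: "ul_algebra A" using assms(1) unfolding ul_chain_def by simp
  have "R \<subseteq> K3 A" and distinct: "\<And>M N. M \<in> R \<Longrightarrow> N \<in> R \<Longrightarrow> isomorphic M N \<Longrightarrow> M = N"
    using assms(3) unfolding iso_representatives_def by blast+
  then have R: "\<And>M. M \<in> R \<Longrightarrow> a_structure A M \<and> finite (fst M)"
    by (auto simp: K3_iff_partial_order)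
  have "hereditary R"
    by (rule hereditary_if_representatives[OF assms(3) K3_embedding_reflects[OF embedding_id_if_substructure]])
  have amalgamation: "amalgamation R"
    by (rule amalgamation_if_representatives[OF assms(3) amalgamation_K3[OF A]])
  have "({}, \<lambda>_ _. one A) \<in> K3 A"
    by (simp add: K3_def a_structure_def)
  then obtain E \<phi> where E: "E \<in> R" "isomorphism \<phi> ({}, \<lambda>_ _. one A) E"
    using assms(3) unfolding iso_representatives_def isomorphic_def by blast
  then have "fst E = {}" unfolding isomorphism_def by simp
  then have "joint_embedding R"
    by (rule joint_embedding_if_amalgamation[OF amalgamation E(1)])
  then show ?thesis
    using countable_if_pairwise_nonisomorphic[OF assms(2) R distinct] R \<open>hereditary R\<close> amalgamation
    unfolding fraisse_class_def by blast
qed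

end
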